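(* For every integer $m\ge 0$ and all integers $n,k$ with $0\le n,k<3\cdot 2^m$, $$\binom{n+3\cdot 2^m}{k}_F\equiv \binom{n}{k}_F \pmod 2.$$
   Context: The Fibonacci numbers are defined by $F_0=0$, $F_1=1$, $F_n=F_{n-1}+F_{n-2}$ for $n\ge 2$. For $n\ge 0$ let $n!_F=F_1F_2\cdots F_n$ (with $0!_F=1$), and for $0\le k\le n$ define the Fibonomial coefficient $\binom{n}{k}_F=\dfrac{n!_F}{k!_F\,(n-k)!_F}$; by convention $\binom{n}{k}_F=0$ if $k<0$ or $k>n$. *)

theory Defs
  imports "HOL-Number_Theory.Number_Theory"
begin

definition fib_fact :: "nat \<Rightarrow> nat" where
  "fib_fact n = (\<Prod>i\<in>{1..n}. fib i)"

text \<open>Fibonomial coefficient; the quotient is exact (a known integer), so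
  natural-number division gives the paper's value. Zero for k > n.\<close>
definition fibonomial :: "nat \<Rightarrow> nat \<Rightarrow> nat" where
  "fibonomial n k = (if k \<le> n then fib_fact n div (fib_fact k * fib_fact (n - k)) else 0)"

end

theory Submission
  imports Defs
begin

text \<open>Fibonomial coefficients satisfy the Pascal-type recurrence
  \<open>C(n+1,k+1) = F(n-k+1) C(n,k) + F(k) C(n,k+1)\<close>, and \<open>F(j)\<close> is odd exactly when \<open>3 \<nmid> j\<close>.
  Reducing the recurrence mod 2 shows that, writing \<open>n = 3a + r\<close> and \<open>k = 3b + s\<close> with
  \<open>r, s < 3\<close>, the Fibonomial coefficient has the parity of \<open>C(a,b)\<close> if \<open>s \<le> r\<close> and is even
  otherwise. Shifting \<open>n\<close> by \<open>3 \<cdot> 2^m\<close> shifts \<open>a\<close> by \<open>2^m\<close>, and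
  \<open>C(a + 2^m, b) \<equiv> C(a, b) (mod 2)\<close> for \<open>a, b < 2^m\<close> because \<open>(1+x)^(2^m) \<equiv> 1 + x^(2^m)\<close>.\<close>

fun fibonomial_rec :: "nat \<Rightarrow> nat \<Rightarrow> nat" where
  "fibonomial_rec n 0 = 1"
| "fibonomial_rec 0 (Suc k) = 0"
| "fibonomial_rec (Suc n) (Suc k) = fib (n - k + 1) * fibonomial_rec n k + fib k * fibonomial_rec n (Suc k)"

lemma fibonomial_rec_eq_0: "n < k \<Longrightarrow> fibonomial_rec n k = 0"
  by (induction n k rule: fibonomial_rec.induct) auto

lemma fib_fact_0 [simp]: "fib_fact 0 = 1"
  unfolding fib_fact_def by simp

lemma fib_fact_Suc: "fib_fact (Suc n) = fib (Suc n) * fib_fact n"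
  unfolding fib_fact_def by (simp add: prod.nat_ivl_Suc' mult.commute)

lemma fib_fact_pos: "0 < fib_fact n"
  unfolding fib_fact_def by (auto intro!: prod_pos simp: fib_neq_0_nat)

lemma fibonomial_rec_mult_fib_fact:
  "k \<le> n \<Longrightarrow> fibonomial_rec n k * fib_fact k * fib_fact (n - k) = fib_fact n"
proof (induction n arbitrary: k)
  case 0
  then show ?case by simp
next
  case (Suc n)
  show ?case
  proof (cases k)
    case 0
    then show ?thesis by simp
  next
    case (Suc j)
    with Suc.prems have "j \<le> n" by simp
    have left: "fib_fact (Suc j) * fib_fact (n - j) * (fib (n - j + 1) * fibonomial_rec n j)
        = fib (Suc j) * fib (Suc (n - j)) * fib_fact n"
      using Suc.IH[OF \<open>j \<le> n\<close>] by (simp add: fib_fact_Suc algebra_simps)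
    have right: "fib_fact (Suc j) * fib_fact (n - j) * (fib j * fibonomial_rec n (Suc j))
        = fib j * fib (n - j) * fib_fact n"
    proof (cases "j = n")
      case True
      then show ?thesis by (simp add: fibonomial_rec_eq_0)
    next
      case False
      with \<open>j \<le> n\<close> have "Suc j \<le> n" by simp
      then have "fib_fact (n - j) = fib (n - j) * fib_fact (n - Suc j)"
        using fib_fact_Suc[of "n - Suc j"] by (simp add: Suc_diff_Suc)
      then show ?thesis using Suc.IH[OF \<open>Suc j \<le> n\<close>] by (simp add: algebra_simps)
    qed
    have "fibonomial_rec (Suc n) (Suc j) * fib_fact (Suc j) * fib_fact (n - j)
        = fib_fact (Suc j) * fib_fact (n - j) * (fib (n - j + 1) * fibonomial_rec n j)
          + fib_fact (Suc j) * fib_fact (n - j) * (fib j * fibonomial_rec n (Suc j))"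
      by (simp only: fibonomial_rec.simps algebra_simps)
    also have "\<dots> = (fib (Suc j) * fib (Suc (n - j)) + fib j * fib (n - j)) * fib_fact n"
      unfolding left right by (simp add: algebra_simps)
    also have "\<dots> = fib (Suc n) * fib_fact n"
      using fib_add[of "n - j" j] \<open>j \<le> n\<close> by (simp add: add.commute)
    finally show ?thesis using Suc by (simp add: fib_fact_Suc)
  qed
qed

lemma fibonomial_eq_fibonomial_rec: "fibonomial n k = fibonomial_rec n k"
proof (cases "k \<le> n")
  case True
  then have "fib_fact n = fibonomial_rec n k * (fib_fact k * fib_fact (n - k))"
    using fibonomial_rec_mult_fib_fact by (simp add: mult.assoc)
  then show ?thesis using True fib_fact_pos by (simp add: fibonomial_def)
qed (simp add: fibonomial_def fibonomial_rec_eq_0)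

lemma even_fib_iff: "even (fib n) \<longleftrightarrow> 3 dvd n"
proof (induction n rule: fib.induct)
  case (3 n)
  then show ?case by (simp add: fib_plus_2[simplified]) presburger
qed simp_all

lemma fib_mult_mod_2: "fib n * x mod 2 = (if 3 dvd n then 0 else x) mod 2"
proof (cases "3 dvd n")
  case False
  then have "fib n mod 2 = 1" using even_fib_iff odd_iff_mod_2_eq_one by blast
  then show ?thesis using False mod_mult_left_eq[of "fib n" 2 x] by simp
qed (simp add: even_fib_iff)

text \<open>Not reduced mod 2: only the parity of this number equals that of the Fibonomial coefficient.\<close>

definition fibonomial_parity :: "nat \<Rightarrow> nat \<Rightarrow> nat" where
  "fibonomial_parity n k = (if k mod 3 \<le> n mod 3 then n div 3 choose k div 3 else 0)"

lemma fibonomial_parity_digits: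
  "r < 3 \<Longrightarrow> s < 3 \<Longrightarrow>
   fibonomial_parity (3 * a + r) (3 * b + s) = (if s \<le> r then a choose b else 0)"
  unfolding fibonomial_parity_def by simp

lemma fibonomial_parity_0_right [simp]: "fibonomial_parity n 0 = 1"
  by (simp add: fibonomial_parity_def)

lemma fibonomial_parity_eq_0:
  assumes "n < k"
  shows "fibonomial_parity n k = 0"
proof -
  have "k mod 3 \<le> n mod 3 \<Longrightarrow> n div 3 < k div 3"
    using assms div_mult_mod_eq[of n 3] div_mult_mod_eq[of k 3] by linarith
  then show ?thesis by (simp add: fibonomial_parity_def binomial_eq_0)
qed

lemma fibonomial_parity_pascal_mod_2:
  assumes "k \<le> n"
  shows "(fib (n - k + 1) * fibonomial_parity n k + fib k * fibonomial_parity n (Suc k)) mod 2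
       = fibonomial_parity (Suc n) (Suc k) mod 2"
proof -
  define a r b s where abrs: "a = n div 3" "r = n mod 3" "b = k div 3" "s = k mod 3"
  then have n: "n = 3 * a + r" "r < 3" and k: "k = 3 * b + s" "s < 3" by simp_all
  have "3 dvd (n - k + 1) \<longleftrightarrow> Suc n mod 3 = k mod 3"
    using assms mod_eq_dvd_iff_nat[of k "Suc n" 3] by (simp add: Suc_diff_le)
  then have dvd_n_k: "3 dvd (n - k + 1) \<longleftrightarrow> s = (r + 1) mod 3"
    by (auto simp: abrs mod_Suc_eq)
  have dvd_k: "3 dvd k \<longleftrightarrow> s = 0"
    by (simp add: abrs dvd_eq_mod_eq_0)
  have Suc_digits: "Suc (3 * x + y) = 3 * (x + (y + 1) div 3) + (y + 1) mod 3" for x y :: nat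
    by simp
  have P_n_k: "fibonomial_parity n k = (if s \<le> r then a choose b else 0)"
    unfolding n k by (rule fibonomial_parity_digits) fact+
  have P_n_Suc_k: "fibonomial_parity n (Suc k)
      = (if (s + 1) mod 3 \<le> r then a choose (b + (s + 1) div 3) else 0)"
    unfolding n k Suc_digits[of b] by (rule fibonomial_parity_digits) (simp_all add: n(2))
  have P_Suc_n_Suc_k: "fibonomial_parity (Suc n) (Suc k)
      = (if (s + 1) mod 3 \<le> (r + 1) mod 3 then (a + (r + 1) div 3) choose (b + (s + 1) div 3) else 0)"
    unfolding n k Suc_digits by (rule fibonomial_parity_digits) simp_all
  have digits: "r \<in> {0, 1, 2}" "s \<in> {0, 1, 2}"
    using n(2) k(2) by auto
  have "(fib (n - k + 1) * fibonomial_parity n k + fib k * fibonomial_parity n (Suc k)) mod 2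
      = ((if 3 dvd (n - k + 1) then 0 else fibonomial_parity n k)
         + (if 3 dvd k then 0 else fibonomial_parity n (Suc k))) mod 2"
    by (intro mod_add_cong fib_mult_mod_2)
  also from digits have "\<dots> = fibonomial_parity (Suc n) (Suc k) mod 2"
    unfolding P_n_k P_n_Suc_k P_Suc_n_Suc_k dvd_n_k dvd_k by (elim insertE emptyE) simp_all
  finally show ?thesis .
qed

lemma fibonomial_rec_mod_2: "fibonomial_rec n k mod 2 = fibonomial_parity n k mod 2"
proof (induction n arbitrary: k)
  case 0
  then show ?case by (cases k) (simp_all add: fibonomial_parity_eq_0)
next
  case (Suc n)
  show ?case
  proof (cases k)
    case 0
    then show ?thesis by simp
  next
    case (Suc j)
    show ?thesis
    proof (cases "j \<le> n")
      case True
      have "fibonomial_rec (Suc n) (Suc j) mod 2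
          = (fib (n - j + 1) * fibonomial_parity n j + fib j * fibonomial_parity n (Suc j)) mod 2"
        unfolding fibonomial_rec.simps
        by (intro mod_add_cong) (metis Suc.IH mod_mult_right_eq)+
      also have "\<dots> = fibonomial_parity (Suc n) (Suc j) mod 2"
        by (rule fibonomial_parity_pascal_mod_2[OF True])
      finally show ?thesis using Suc by simp
    next
      case False
      then show ?thesis using Suc by (simp add: fibonomial_rec_eq_0 fibonomial_parity_eq_0)
    qed
  qed
qed

lemma fibonomial_mod_2: "fibonomial n k mod 2 = fibonomial_parity n k mod 2"
  by (simp add: fibonomial_eq_fibonomial_rec fibonomial_rec_mod_2)

lemma choose_add_two_power_mod_2:
  "(a + 2 ^ m choose b) mod 2 = ((a choose b) + (if 2 ^ m \<le> b then a choose (b - 2 ^ m) else 0)) mod 2"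
proof (induction m arbitrary: a b)
  case 0
  then show ?case by (cases b) (simp_all add: add.commute)
next
  case (Suc m)
  have split: "a + 2 ^ Suc m = (a + 2 ^ m) + 2 ^ m" by simp
  show ?case
  proof (cases "2 ^ m \<le> b")
    case False
    then show ?thesis unfolding split using Suc.IH[of "a + 2 ^ m" b] Suc.IH[of a b] by simp
  next
    case True
    define c where "c = b - 2 ^ m"
    have c: "2 ^ m \<le> c \<longleftrightarrow> 2 ^ Suc m \<le> b" "c - 2 ^ m = b - 2 ^ Suc m"
      using True by (auto simp: c_def)
    define t where "t = (if 2 ^ m \<le> c then a choose (c - 2 ^ m) else 0)"
    have "(a + 2 ^ Suc m choose b) mod 2 = ((a + 2 ^ m choose b) + (a + 2 ^ m choose c)) mod 2"
      unfolding split Suc.IH[of "a + 2 ^ m" b] using True by (simp add: c_def)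
    also have "\<dots> = ((a choose b) + (a choose c) + ((a choose c) + t)) mod 2"
      by (intro mod_add_cong) (simp_all add: Suc.IH True c_def t_def)
    also have "\<dots> = ((a choose b) + t + 2 * (a choose c)) mod 2"
      by (rule arg_cong[where f = "\<lambda>x. x mod 2"]) simp
    finally show ?thesis by (simp add: t_def c)
  qed
qed

theorem mainTheorem1:
  fixes m n k :: nat
  assumes "n < 3 * 2 ^ m" and "k < 3 * 2 ^ m"
  shows "[fibonomial (n + 3 * 2 ^ m) k = fibonomial n k] (mod 2)"
proof -
  have "n div 3 < 2 ^ m" "k div 3 < 2 ^ m" using assms by linarith+
  then have "(n div 3 + 2 ^ m choose k div 3) mod 2 = (n div 3 choose k div 3) mod 2"
    using choose_add_two_power_mod_2[of "n div 3" m "k div 3"] by simp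
  then have "fibonomial_parity (n + 3 * 2 ^ m) k mod 2 = fibonomial_parity n k mod 2"
    by (simp add: fibonomial_parity_def add.commute)
  then show ?thesis unfolding cong_def fibonomial_mod_2 .
qed

end
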